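(* Let $n \geq 1$ and fix integers $\lambda_2 \geq \lambda_3 \geq \cdots \geq \lambda_n \geq 0$. For integers $\lambda_1 \geq \lambda_2$ let $\lambda = (\lambda_1, \lambda_2, \ldots, \lambda_n)$. Then $A_\lambda(n)$, regarded as a function of $\lambda_1$, is a polynomial in $\lambda_1$ of degree $n-1$.
   Context: Six-vertex model: on an $r \times c$ grid there are $r$ horizontal lines and $c$ vertical lines meeting in $rc$ vertices. Each horizontal line consists of $c+1$ edges (the outermost ones are a left and a right boundary edge) and each vertical line of $r+1$ edges (the outermost ones are a top and a bottom boundary edge). A state assigns an orientation to every edge (left/right for horizontal edges, up/down for vertical edges), agreeing with prescribed orientations on the boundary edges, such that at every vertex exactly two of the four adjacent edges point into the vertex and two point out of it. For a partition $\lambda = (\lambda_1, \ldots, \lambda_n)$ (integers $\lambda_1 \geq \cdots \geq \lambda_n \geq 0$), $A_\lambda(n)$ is the number of states of the six-vertex model on the grid with $n$ rows and $n + \lambda_1$ columns with boundary conditions: all left boundary arrows point right, all right boundary arrows point left, all bottom boundary arrows point down, and, numbering the columns $1, 2, \ldots, n+\lambda_1$ from right to left, the top boundary arrow in column $i$ points up if $i \in \{\lambda_k + n + 1 - k : 1 \leq k \leq n\}$ and down otherwise. *)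

theory Defs
  imports Main "HOL-Computational_Algebra.Polynomial"
begin

text \<open>Six-vertex model on the grid with n rows and m = n + lam 1 columns.
Rows are indexed 0..n-1 from top to bottom, vertex columns 0..m-1 from left to right.
Horizontal edge  h i j  (row i, j = 0..m) lies immediately left of vertex (i,j);
h i j = True means the arrow points right.
Vertical edge  v k j  (column j, k = 0..n) lies immediately above vertex (k,j);
v k j = True means the arrow points up.
Edge values outside the grid are normalised to False so that states are counted exactly once.
The partition is lam 1, ..., lam n.  The paper numbers columns 1..m from right to left,
so paper column c corresponds to left-to-right index j = m - c.\<close>

definition top_up_cols :: "nat \<Rightarrow> (nat \<Rightarrow> nat) \<Rightarrow> nat set" where
  "top_up_cols n lam = {lam k + n + 1 - k | k. 1 \<le> k \<and> k \<le> n}"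

definition six_vertex_states ::
  "nat \<Rightarrow> (nat \<Rightarrow> nat) \<Rightarrow> ((nat \<Rightarrow> nat \<Rightarrow> bool) \<times> (nat \<Rightarrow> nat \<Rightarrow> bool)) set" where
  "six_vertex_states n lam = (let m = n + lam 1 in
     {(h, v). (\<forall>i j. (n \<le> i \<or> m < j) \<longrightarrow> \<not> h i j)
            \<and> (\<forall>k j. (n < k \<or> m \<le> j) \<longrightarrow> \<not> v k j)
            \<and> (\<forall>i<n. h i 0)
            \<and> (\<forall>i<n. \<not> h i m)
            \<and> (\<forall>j<m. \<not> v n j)
            \<and> (\<forall>j<m. v 0 j \<longleftrightarrow> m - j \<in> top_up_cols n lam)
            \<and> (\<forall>i<n. \<forall>j<m.
                 of_bool (h i j) + of_bool (\<not> h i (Suc j)) + of_bool (\<not> v i j)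
                 + of_bool (v (Suc i) j) = (2::nat))})"

definition A_lambda :: "(nat \<Rightarrow> nat) \<Rightarrow> nat \<Rightarrow> nat" where
  "A_lambda lam n = card (six_vertex_states n lam)"

end

theory Submission
  imports Defs
begin

text \<open>
  Read off, on every horizontal line of vertical edges, the set of columns whose arrow points up.
  Conservation of arrows along a row shows that the ice rule holds exactly when the set below
  interlaces the set above, and that the row is then unique: its horizontal arrow at column t
  points right iff the set above has one more element than the set below among the columns
  1, ..., t. So \<open>A_\<lambda>(n)\<close> counts Gelfand-Tsetlin patterns with top row
  \<open>{\<lambda>\<^sub>1 + n} \<union> F\<close>, where
  \<open>F = {\<lambda>\<^sub>k + n + 1 - k | 2 \<le> k \<le> n}\<close>.

  For a top row \<open>{x} \<union> F\<close> with \<open>x > Max F\<close>, the second row either lies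
  below \<open>Max F\<close>, which contributes a number independent of \<open>x\<close>, or it is
  \<open>{y} \<union> G\<close> with \<open>Max F < y \<le> x\<close> and \<open>G\<close> interlacing \<open>F\<close>. By
  induction on \<open>card F\<close> the count for top row \<open>{y} \<union> G\<close> is a polynomial in
  \<open>y\<close> of degree \<open>card G\<close> with positive leading coefficient. Summing it over
  \<open>y\<close> raises the degree by one, and positive leading coefficients cannot cancel.
\<close>

section \<open>Summing polynomials over intervals\<close>

lemma poly_pochhammer_X:
  "poly (pochhammer [:0, 1:] k) x = pochhammer (x :: 'a :: comm_semiring_1) k"
  by (induction k) (simp_all add: pochhammer_Suc of_nat_poly algebra_simps)

lemma degree_lead_coeff_pochhammer_X:
  "degree (pochhammer [:0, 1:] k :: 'a :: idom poly) = k \<and>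
   lead_coeff (pochhammer [:0, 1:] k :: 'a poly) = 1"
proof (induction k)
  case (Suc k)
  have eq: "pochhammer [:0, 1:] (Suc k) = pochhammer [:0, 1:] k * ([:of_nat k, 1:] :: 'a poly)"
    by (simp add: pochhammer_Suc of_nat_poly)
  have "pochhammer [:0, 1:] k \<noteq> (0 :: 'a poly)" using Suc by auto
  then have "degree (pochhammer [:0, 1:] k * ([:of_nat k, 1:] :: 'a poly)) = Suc k"
    using Suc by (subst degree_mult_eq) auto
  moreover have "lead_coeff (pochhammer [:0, 1:] k * ([:of_nat k, 1:] :: 'a poly)) = 1"
    using Suc by (subst lead_coeff_mult) auto
  ultimately show ?case unfolding eq by blast
qed simp

lemma poly_pochhammer_X_diff:
  fixes x :: "'a :: comm_ring_1"
  shows "poly (pochhammer [:0, 1:] (Suc k)) x - poly (pochhammer [:0, 1:] (Suc k)) (x - 1)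
           = of_nat (Suc k) * poly (pochhammer [:0, 1:] k) x"
  using pochhammer_rec[of "x - 1" k] by (simp add: poly_pochhammer_X pochhammer_Suc algebra_simps)

lemma discrete_antiderivative:
  fixes Q :: "'a :: field_char_0 poly"
  assumes "degree Q \<le> d"
  shows "\<exists>R. (\<forall>x. poly R x - poly R (x - 1) = poly Q x) \<and> degree R \<le> Suc d
           \<and> coeff R (Suc d) = coeff Q d / of_nat (Suc d)"
  using assms
proof (induction d arbitrary: Q rule: less_induct)
  case (less d)
  \<comment> \<open>Remove the top coefficient in the rising-factorial basis and recurse.\<close>
  define c where "c = coeff Q d"
  define Q' where "Q' = Q - smult c (pochhammer [:0, 1:] d)"
  have "\<exists>R'. (\<forall>x. poly R' x - poly R' (x - 1) = poly Q' x) \<and> degree R' \<le> d"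
  proof (cases d)
    case 0
    then have "Q' = 0"
      using less.prems degree_0_id[of Q] by (simp add: Q'_def c_def)
    then show ?thesis by (intro exI[of _ 0]) simp
  next
    case (Suc e)
    have "degree Q' \<le> d"
      using less.prems degree_lead_coeff_pochhammer_X[of d, where 'a = 'a] unfolding Q'_def
      by (intro degree_diff_le) (auto intro: order.trans[OF degree_smult_le])
    moreover have "coeff Q' d = 0"
      using degree_lead_coeff_pochhammer_X[of d, where 'a = 'a] by (auto simp: Q'_def c_def)
    ultimately have "degree Q' \<le> e"
      using Suc by (intro degree_le allI impI)
        (metis Suc_leI coeff_eq_0 le_less_trans order.not_eq_order_implies_strict)
    then obtain R' where "\<forall>x. poly R' x - poly R' (x - 1) = poly Q' x" "degree R' \<le> Suc e"
      using less.IH[of e Q'] Suc by auto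
    then show ?thesis using Suc by blast
  qed
  then obtain R' where R': "\<forall>x. poly R' x - poly R' (x - 1) = poly Q' x" "degree R' \<le> d"
    by blast
  define R where "R = smult (c / of_nat (Suc d)) (pochhammer [:0, 1:] (Suc d)) + R'"
  show ?case
  proof (intro exI[of _ R] conjI allI)
    fix x :: 'a
    show "poly R x - poly R (x - 1) = poly Q x"
      using R'(1) poly_pochhammer_X_diff[of d x]
      by (simp add: R_def Q'_def algebra_simps del: of_nat_Suc)
    show "degree R \<le> Suc d"
      unfolding R_def using R'(2) degree_lead_coeff_pochhammer_X[of "Suc d", where 'a = 'a]
      by (intro degree_add_le) (auto intro: order.trans[OF degree_smult_le])
    show "coeff R (Suc d) = coeff Q d / of_nat (Suc d)"
      using R'(2) degree_lead_coeff_pochhammer_X[of "Suc d", where 'a = 'a]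
      by (auto simp: R_def c_def coeff_eq_0)
  qed
qed

lemma partial_sums_poly:
  fixes Q :: "'a :: field_char_0 poly"
  assumes "Q \<noteq> 0"
  shows "\<exists>R. degree R = Suc (degree Q) \<and> lead_coeff R = lead_coeff Q / of_nat (Suc (degree Q)) \<and>
           (\<forall>x\<ge>a. poly R (of_nat x) = C + (\<Sum>y\<in>{a<..x}. poly Q (of_nat y)))"
proof -
  obtain R0 where R0: "\<forall>x. poly R0 x - poly R0 (x - 1) = poly Q x" "degree R0 \<le> Suc (degree Q)"
    "coeff R0 (Suc (degree Q)) = lead_coeff Q / of_nat (Suc (degree Q))"
    using discrete_antiderivative[of Q "degree Q"] by auto
  have "coeff R0 (Suc (degree Q)) \<noteq> 0"
    using R0(3) assms by (simp del: of_nat_Suc)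
  then have deg: "degree R0 = Suc (degree Q)"
    using R0(2) le_degree by (metis antisym)
  have telescope: "poly R0 (of_nat x) = poly R0 (of_nat a) + (\<Sum>y\<in>{a<..x}. poly Q (of_nat y))"
    if "a \<le> x" for x
    using that
  proof (induction x rule: dec_induct)
    case (step x)
    have "{a<..Suc x} = insert (Suc x) {a<..x}"
      using step by auto
    then show ?case
      using step R0(1)[rule_format, of "of_nat (Suc x)"] by (simp add: algebra_simps)
  qed simp
  show ?thesis
  proof (intro exI[of _ "R0 + [:C - poly R0 (of_nat a):]"] conjI allI impI)
    show "degree (R0 + [:C - poly R0 (of_nat a):]) = Suc (degree Q)"
      using deg by (subst degree_add_eq_left) auto
    then show "lead_coeff (R0 + [:C - poly R0 (of_nat a):])
                 = lead_coeff Q / of_nat (Suc (degree Q))"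
      using R0(3) deg by simp
    show "poly (R0 + [:C - poly R0 (of_nat a):]) (of_nat x) = C + (\<Sum>y\<in>{a<..x}. poly Q (of_nat y))"
      if "a \<le> x" for x
      using telescope[OF that] by simp
  qed
qed

lemma sum_polys_pos_lead_coeff:
  fixes p :: "'i \<Rightarrow> 'a :: linordered_idom poly"
  assumes "finite I" "I \<noteq> {}"
    and "\<And>i. i \<in> I \<Longrightarrow> degree (p i) = d" "\<And>i. i \<in> I \<Longrightarrow> lead_coeff (p i) > 0"
  shows "degree (\<Sum>i\<in>I. p i) = d \<and> lead_coeff (\<Sum>i\<in>I. p i) > 0"
proof -
  have pos: "coeff (\<Sum>i\<in>I. p i) d > 0"
    unfolding coeff_sum using assms by (intro sum_pos) auto
  have "degree (\<Sum>i\<in>I. p i) \<le> d"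
    using assms(1,3) by (intro degree_sum_le) auto
  moreover have "d \<le> degree (\<Sum>i\<in>I. p i)"
    using pos by (intro le_degree) simp
  ultimately have "degree (\<Sum>i\<in>I. p i) = d"
    by (rule antisym)
  with pos show ?thesis by simp
qed

lemma sum_polynomial_functions:
  fixes f :: "'i \<Rightarrow> 'b \<Rightarrow> 'a :: linordered_idom"
  assumes "finite I" "I \<noteq> {}"
    and "\<And>i. i \<in> I \<Longrightarrow> \<exists>p. degree p = d \<and> lead_coeff p > 0 \<and> (\<forall>y. P i y \<longrightarrow> f i y = poly p (g y))"
  shows "\<exists>q. degree q = d \<and> lead_coeff q > 0 \<and> (\<forall>y. (\<forall>i\<in>I. P i y) \<longrightarrow> (\<Sum>i\<in>I. f i y) = poly q (g y))"
proof -
  obtain p where p: "\<And>i. i \<in> I \<Longrightarrow> degree (p i) = d \<and> lead_coeff (p i) > 0 \<and>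
      (\<forall>y. P i y \<longrightarrow> f i y = poly (p i) (g y))"
    using assms(3) by metis
  show ?thesis
    using sum_polys_pos_lead_coeff[OF assms(1,2), of p d] p
    by (intro exI[of _ "\<Sum>i\<in>I. p i"]) (auto simp: poly_sum intro!: sum.cong)
qed

section \<open>Interlacing sets and Gelfand-Tsetlin patterns\<close>

text \<open>
  For \<open>U = {u\<^sub>0 < \<dots> < u\<^sub>k}\<close> and \<open>B = {b\<^sub>1 < \<dots> < b\<^sub>k}\<close>,
  \<open>interlaces U B\<close> says \<open>u\<^sub>0 \<le> b\<^sub>1 \<le> u\<^sub>1 \<le> \<dots> \<le> b\<^sub>k \<le> u\<^sub>k\<close>, and
  \<open>gt_count k U\<close> counts the chains \<open>U = U\<^sub>0, U\<^sub>1, \<dots>, U\<^sub>k = {}\<close> of sets of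
  positive integers in which each \<open>U\<^sub>i\<^sub>+\<^sub>1\<close> interlaces \<open>U\<^sub>i\<close>, i.e. the
  Gelfand-Tsetlin patterns with top row \<open>U\<close>.
\<close>

definition prefix_counts_interlace :: "nat set \<Rightarrow> nat set \<Rightarrow> bool" where
  "prefix_counts_interlace U B \<longleftrightarrow>
     (\<forall>s. card (B \<inter> {..s}) \<le> card (U \<inter> {..s}) \<and> card (U \<inter> {..s}) \<le> Suc (card (B \<inter> {..s})))"

definition interlaces :: "nat set \<Rightarrow> nat set \<Rightarrow> bool" where
  "interlaces U B \<longleftrightarrow> card U = Suc (card B) \<and> prefix_counts_interlace U B"

fun gt_count :: "nat \<Rightarrow> nat set \<Rightarrow> nat" where
  "gt_count 0 U = (if U = {} then 1 else 0)"
| "gt_count (Suc k) U = (\<Sum>B | B \<subseteq> {1..Max U} \<and> interlaces U B. gt_count k B)"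

lemma interlaces_prefix_counts:
  assumes "interlaces U B"
  shows "card (B \<inter> {..s}) \<le> card (U \<inter> {..s})" "card (U \<inter> {..s}) \<le> Suc (card (B \<inter> {..s}))"
  using assms by (simp_all add: interlaces_def prefix_counts_interlace_def)

lemma interlaces_le_Max:
  assumes "interlaces U B" "finite B" "b \<in> B"
  shows "b \<le> Max U"
proof (rule ccontr)
  assume b: "\<not> b \<le> Max U"
  have card_U: "card U = Suc (card B)"
    using assms(1) by (simp add: interlaces_def)
  then have "finite U" "U \<noteq> {}"
    using card_ge_0_finite[of U] by auto
  then have "U \<inter> {..Max U} = U"
    by auto
  moreover have "card (B \<inter> {..Max U}) < card B"
    using assms(2,3) b by (intro psubset_card_mono) auto
  moreover have "card (U \<inter> {..Max U}) \<le> Suc (card (B \<inter> {..Max U}))"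
    using interlaces_prefix_counts(2)[OF assms(1)] .
  ultimately show False
    using card_U by simp
qed

lemma interlaces_remove_Max:
  assumes "finite F" "F \<noteq> {}"
  shows "interlaces F (F - {Max F})"
proof -
  have card_F: "card F = Suc (card (F - {Max F}))"
    using card_Suc_Diff1[OF assms(1) Max_in[OF assms]] by simp
  have "card ((F - {Max F}) \<inter> {..s}) \<le> card (F \<inter> {..s}) \<and>
        card (F \<inter> {..s}) \<le> Suc (card ((F - {Max F}) \<inter> {..s}))" for s
  proof (cases "s < Max F")
    case True
    then have "(F - {Max F}) \<inter> {..s} = F \<inter> {..s}"
      by auto
    then show ?thesis by simp
  next
    case False
    then have "F \<inter> {..s} = F" "(F - {Max F}) \<inter> {..s} = F - {Max F}"
      using assms by (auto dest: Max_ge[OF assms(1)])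
    then show ?thesis
      using card_F by simp
  qed
  then show ?thesis
    using card_F by (simp add: interlaces_def prefix_counts_interlace_def)
qed

lemma inj_on_insert_fresh:
  assumes "\<And>y G. y \<in> Y \<Longrightarrow> G \<in> Gs \<Longrightarrow> y \<notin> G"
  shows "inj_on (\<lambda>(y, G). insert y G) (Y \<times> Gs)"
proof (rule inj_onI)
  fix p q
  assume "p \<in> Y \<times> Gs" "q \<in> Y \<times> Gs" and "(\<lambda>(y, G). insert y G) p = (\<lambda>(y, G). insert y G) q"
  moreover obtain y G y' G' where pq: "p = (y, G)" "q = (y', G')"
    by (cases p, cases q)
  ultimately have "y \<notin> G" "y \<notin> G'" "insert y G = insert y' G'"
    using assms by auto
  moreover from this have "y = y'"
    by blast
  ultimately show "p = q"
    using pq by (simp add: insert_ident)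
qed

context
  fixes F :: "nat set" and x :: nat
  assumes finite_F: "finite F" and F_nonempty: "F \<noteq> {}" and Max_less: "Max F < x"
begin

lemma card_insert_above_Max: "card (insert x F) = Suc (card F)"
proof -
  have "x \<notin> F"
    using Max_ge[OF finite_F, of x] Max_less by auto
  then show ?thesis
    using finite_F by simp
qed

lemma insert_above_Max_Int_atMost: "insert x F \<inter> {..s} = (if s < x then F \<inter> {..s} else insert x F)"
  using finite_F Max_less by (auto dest: Max_ge[OF finite_F])

lemma interlaces_insert_above_Max_iff:
  assumes "B \<subseteq> {..Max F}"
  shows "interlaces (insert x F) B \<longleftrightarrow> card B = card F \<and> prefix_counts_interlace F B"
proof -
  have same_counts:
    "(card (B \<inter> {..s}) \<le> card (insert x F \<inter> {..s}) \<and>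
      card (insert x F \<inter> {..s}) \<le> Suc (card (B \<inter> {..s})))
     \<longleftrightarrow> (card (B \<inter> {..s}) \<le> card (F \<inter> {..s}) \<and> card (F \<inter> {..s}) \<le> Suc (card (B \<inter> {..s})))"
    if "card B = card F" for s
  proof (cases "s < x")
    case False
    then have "F \<inter> {..s} = F" "B \<inter> {..s} = B"
      using assms Max_less by (auto dest: Max_ge[OF finite_F])
    then show ?thesis
      using False that by (simp add: insert_above_Max_Int_atMost card_insert_above_Max)
  qed (simp add: insert_above_Max_Int_atMost)
  show ?thesis
    unfolding interlaces_def prefix_counts_interlace_def card_insert_above_Max
    using same_counts by auto
qed

lemma interlaces_insert_above_Max_Diff_below:
  assumes B: "interlaces (insert x F) B" "finite B" and y: "y \<in> B" "Max F < y"
  shows "B - {y} \<subseteq> {..Max F}"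
proof
  fix z assume z: "z \<in> B - {y}"
  show "z \<in> {..Max F}"
  proof (rule ccontr)
    assume "z \<notin> {..Max F}"
    then have "card (insert y (insert z (B \<inter> {..Max F}))) = Suc (Suc (card (B \<inter> {..Max F})))"
      using z y(2) B(2) by auto
    moreover have "insert y (insert z (B \<inter> {..Max F})) \<subseteq> B"
      using z y(1) by auto
    ultimately have "Suc (Suc (card (B \<inter> {..Max F}))) \<le> card B"
      using B(2) by (metis card_mono)
    moreover have "insert x F \<inter> {..Max F} = F"
      using Max_less by (auto simp: insert_above_Max_Int_atMost dest: Max_ge[OF finite_F])
    then have "card F \<le> Suc (card (B \<inter> {..Max F}))"
      using interlaces_prefix_counts(2)[OF B(1), of "Max F"] by simp
    ultimately show False
      using B(1) by (simp add: interlaces_def card_insert_above_Max)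
  qed
qed

lemma interlaces_insert_above_Max_remove:
  assumes B: "interlaces (insert x F) B" "B \<subseteq> {1..x}" and y: "y \<in> B" "Max F < y"
  shows "B - {y} \<subseteq> {1..Max F} \<and> interlaces F (B - {y})"
proof -
  have finite_B: "finite B"
    using B(2) finite_subset by blast
  have below: "B - {y} \<subseteq> {..Max F}"
    using interlaces_insert_above_Max_Diff_below[OF B(1) finite_B y] .
  have card_F: "card F = Suc (card (B - {y}))"
    using B(1) card_Suc_Diff1[OF finite_B y(1)] by (simp add: interlaces_def card_insert_above_Max)
  have "card ((B - {y}) \<inter> {..s}) \<le> card (F \<inter> {..s}) \<and>
        card (F \<inter> {..s}) \<le> Suc (card ((B - {y}) \<inter> {..s}))" for s
  proof (cases "s < y")
    case True
    then have "(B - {y}) \<inter> {..s} = B \<inter> {..s}" "insert x F \<inter> {..s} = F \<inter> {..s}"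
      using y B(2) by (auto simp: insert_above_Max_Int_atMost)
    then show ?thesis
      using interlaces_prefix_counts[OF B(1), of s] by simp
  next
    case False
    then have "F \<inter> {..s} = F" "(B - {y}) \<inter> {..s} = B - {y}"
      using below y(2) by (auto dest: Max_ge[OF finite_F])
    then show ?thesis
      using card_F by simp
  qed
  moreover have "B - {y} \<subseteq> {1..Max F}"
    using below B(2) by (auto simp: subset_iff)
  ultimately show ?thesis
    using card_F by (simp add: interlaces_def prefix_counts_interlace_def)
qed

lemma interlaces_insert_above_Max_insert:
  assumes G: "interlaces F G" "G \<subseteq> {1..Max F}" and y: "Max F < y" "y \<le> x"
  shows "interlaces (insert x F) (insert y G)"
proof -
  have "y \<notin> G"
    using G(2) y(1) by auto
  moreover have "finite G"
    using G(2) finite_subset by blast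
  ultimately have card_yG: "card (insert y G) = card F"
    using G(1) by (simp add: interlaces_def)
  have "card (insert y G \<inter> {..s}) \<le> card (insert x F \<inter> {..s}) \<and>
        card (insert x F \<inter> {..s}) \<le> Suc (card (insert y G \<inter> {..s}))" for s
  proof (cases "s < y")
    case True
    then have "insert y G \<inter> {..s} = G \<inter> {..s}" "insert x F \<inter> {..s} = F \<inter> {..s}"
      using y by (auto simp: insert_above_Max_Int_atMost)
    then show ?thesis
      using interlaces_prefix_counts[OF G(1), of s] by simp
  next
    case False
    then have "insert y G \<inter> {..s} = insert y G" "F \<inter> {..s} = F"
      using G(2) y(1) by (auto dest: Max_ge[OF finite_F])
    then show ?thesis
      using card_yG by (simp add: insert_above_Max_Int_atMost card_insert_above_Max)
  qed
  then show ?thesis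
    using card_yG by (simp add: interlaces_def prefix_counts_interlace_def card_insert_above_Max)
qed

lemma interlacing_sets_insert_above_Max:
  "{B. B \<subseteq> {1..x} \<and> interlaces (insert x F) B} =
     {B. B \<subseteq> {1..Max F} \<and> card B = card F \<and> prefix_counts_interlace F B}
     \<union> (\<lambda>(y, G). insert y G) ` ({Max F<..x} \<times> {G. G \<subseteq> {1..Max F} \<and> interlaces F G})"
  (is "?I = ?A \<union> ?C")
proof (intro equalityI subsetI)
  fix B assume "B \<in> ?I"
  then have B: "B \<subseteq> {1..x}" "interlaces (insert x F) B"
    by auto
  show "B \<in> ?A \<union> ?C"
  proof (cases "B \<subseteq> {1..Max F}")
    case True
    then have "B \<subseteq> {..Max F}"
      by auto
    then show ?thesis
      using True B(2) interlaces_insert_above_Max_iff[of B] by simp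
  next
    case False
    then obtain y where y: "y \<in> B" "Max F < y"
      using B(1) by (auto simp: subset_iff not_le)
    then have "B - {y} \<subseteq> {1..Max F} \<and> interlaces F (B - {y})"
      using interlaces_insert_above_Max_remove[OF B(2,1)] by blast
    moreover have "B = insert y (B - {y})" "y \<le> x"
      using y B(1) by auto
    ultimately show ?thesis
      using y(2) by (auto intro!: image_eqI[of _ _ "(y, B - {y})"])
  qed
next
  fix B assume "B \<in> ?A \<union> ?C"
  then show "B \<in> ?I"
  proof
    assume B: "B \<in> ?A"
    then have "B \<subseteq> {..Max F}" "B \<subseteq> {1..x}"
      using Max_less by auto
    then show "B \<in> ?I"
      using B interlaces_insert_above_Max_iff[of B] by simp
  next
    assume "B \<in> ?C"
    then obtain y G where "B = insert y G" "Max F < y" "y \<le> x" "G \<subseteq> {1..Max F}" "interlaces F G"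
      by auto
    then show "B \<in> ?I"
      using interlaces_insert_above_Max_insert Max_less by auto
  qed
qed

lemma gt_count_insert_above_Max:
  "gt_count (Suc k) (insert x F) =
     (\<Sum>B | B \<subseteq> {1..Max F} \<and> card B = card F \<and> prefix_counts_interlace F B. gt_count k B)
     + (\<Sum>y\<in>{Max F<..x}. \<Sum>G | G \<subseteq> {1..Max F} \<and> interlaces F G. gt_count k (insert y G))"
proof -
  define A where "A = {B. B \<subseteq> {1..Max F} \<and> card B = card F \<and> prefix_counts_interlace F B}"
  define Gs where "Gs = {G. G \<subseteq> {1..Max F} \<and> interlaces F G}"
  have finite_A: "finite A" and finite_Gs: "finite Gs"
    by (auto simp: A_def Gs_def intro: finite_subset[of _ "Pow {1..Max F}"])
  have "Max (insert x F) = x"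
    using finite_F F_nonempty Max_less by simp
  then have "gt_count (Suc k) (insert x F)
             = (\<Sum>B\<in>A \<union> (\<lambda>(y, G). insert y G) ` ({Max F<..x} \<times> Gs). gt_count k B)"
    using interlacing_sets_insert_above_Max by (simp add: A_def Gs_def)
  also have "\<dots> = (\<Sum>B\<in>A. gt_count k B)
                    + (\<Sum>B\<in>(\<lambda>(y, G). insert y G) ` ({Max F<..x} \<times> Gs). gt_count k B)"
    using finite_A finite_Gs by (intro sum.union_disjoint) (auto simp: A_def)
  also have "(\<Sum>B\<in>(\<lambda>(y, G). insert y G) ` ({Max F<..x} \<times> Gs). gt_count k B)
             = (\<Sum>(y, G)\<in>{Max F<..x} \<times> Gs. gt_count k (insert y G))"
  proof (rule sum.reindex_cong[OF _ refl])
    show "inj_on (\<lambda>(y, G). insert y G) ({Max F<..x} \<times> Gs)"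
      by (rule inj_on_insert_fresh) (auto simp: Gs_def)
  qed (simp add: split_beta)
  also have "\<dots> = (\<Sum>y\<in>{Max F<..x}. \<Sum>G\<in>Gs. gt_count k (insert y G))"
    by (rule sum.cartesian_product[symmetric])
  finally show ?thesis
    by (simp add: A_def Gs_def)
qed

end

lemma interlacing_subsets_nonempty:
  assumes "finite F" "F \<noteq> {}" "0 \<notin> F"
  shows "{G. G \<subseteq> {1..Max F} \<and> interlaces F G} \<noteq> {}"
proof -
  have "F \<subseteq> {1..Max F}"
  proof
    fix z assume "z \<in> F"
    moreover from this have "z \<noteq> 0"
      using assms(3) by metis
    ultimately show "z \<in> {1..Max F}"
      using assms(1) by simp
  qed
  then show ?thesis
    using interlaces_remove_Max[OF assms(1,2)] by blast
qed

lemma gt_count_singleton: "gt_count (Suc 0) {x} = 1"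
proof -
  have "card ({x} \<inter> {..s}) \<le> 1" for s
    by (rule order.trans[OF card_mono[of "{x}"]]) auto
  then have "{B. B \<subseteq> {1..x} \<and> interlaces {x} B} = {{}}"
    by (auto simp: interlaces_def prefix_counts_interlace_def card_eq_0_iff dest: finite_subset)
  then show ?thesis
    by simp
qed

lemma gt_count_insert_poly:
  assumes "finite F" "card F = d" "0 \<notin> F"
  shows "\<exists>p :: real poly. degree p = d \<and> lead_coeff p > 0 \<and>
           (\<forall>x. (\<forall>z\<in>F. z < x) \<longrightarrow> real (gt_count (Suc d) (insert x F)) = poly p (real x))"
  using assms
proof (induction d arbitrary: F)
  case 0
  then show ?case
    using gt_count_singleton by (intro exI[of _ 1]) simp
next
  case (Suc d)
  have finite_F: "finite F" and F_nonempty: "F \<noteq> {}"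
    using Suc.prems(1,2) by auto
  define c where
    "c = (\<Sum>B | B \<subseteq> {1..Max F} \<and> card B = card F \<and> prefix_counts_interlace F B. gt_count (Suc d) B)"
  define Gs where "Gs = {G. G \<subseteq> {1..Max F} \<and> interlaces F G}"
  have "finite Gs"
    by (auto simp: Gs_def intro: finite_subset[of _ "Pow {1..Max F}"])
  moreover have "Gs \<noteq> {}"
    unfolding Gs_def using interlacing_subsets_nonempty[OF finite_F F_nonempty Suc.prems(3)] .
  moreover have "\<exists>p :: real poly. degree p = d \<and> lead_coeff p > 0 \<and>
      (\<forall>y. (\<forall>z\<in>G. z < y) \<longrightarrow> real (gt_count (Suc d) (insert y G)) = poly p (real y))"
    if "G \<in> Gs" for G
  proof (rule Suc.IH)
    show "finite G" "0 \<notin> G"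
      using that finite_subset by (auto simp: Gs_def)
    show "card G = d"
      using that Suc.prems(2) by (simp add: Gs_def interlaces_def)
  qed
  ultimately have "\<exists>Q :: real poly. degree Q = d \<and> lead_coeff Q > 0 \<and>
      (\<forall>y. (\<forall>G\<in>Gs. \<forall>z\<in>G. z < y) \<longrightarrow>
         (\<Sum>G\<in>Gs. real (gt_count (Suc d) (insert y G))) = poly Q (real y))"
    by (rule sum_polynomial_functions[where P = "\<lambda>G y. \<forall>z\<in>G. z < y" and g = real
          and f = "\<lambda>G y. real (gt_count (Suc d) (insert y G))"])
  then obtain Q :: "real poly" where Q: "degree Q = d" "lead_coeff Q > 0"
    "\<And>y. (\<forall>G\<in>Gs. \<forall>z\<in>G. z < y) \<Longrightarrow>
       (\<Sum>G\<in>Gs. real (gt_count (Suc d) (insert y G))) = poly Q (real y)"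
    by blast
  obtain R :: "real poly" where R: "degree R = Suc d" "lead_coeff R = lead_coeff Q / real (Suc d)"
    "\<And>x. Max F \<le> x \<Longrightarrow> poly R (real x) = real c + (\<Sum>y\<in>{Max F<..x}. poly Q (real y))"
    using partial_sums_poly[of Q "Max F" "real c"] Q(1,2) by fastforce
  have "real (gt_count (Suc (Suc d)) (insert x F)) = poly R (real x)" if "\<forall>z\<in>F. z < x" for x
  proof -
    have "Max F < x"
      using that finite_F F_nonempty by simp
    moreover have "(\<Sum>G\<in>Gs. real (gt_count (Suc d) (insert y G))) = poly Q (real y)"
      if "Max F < y" for y
      using that by (intro Q(3)) (auto simp: Gs_def)
    ultimately show ?thesis
      using gt_count_insert_above_Max[OF finite_F F_nonempty, of x "Suc d"] R(3)
      by (simp add: c_def Gs_def)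
  qed
  then show ?case
    using R(1,2) Q(2) by (intro exI[of _ R]) simp
qed


section \<open>Six-vertex states as Gelfand-Tsetlin patterns\<close>

text \<open>
  A row with \<open>m\<close> vertices: \<open>r j\<close> is the horizontal edge left of vertex \<open>j\<close>
  (\<open>True\<close> = pointing right), and \<open>U\<close>, \<open>B\<close> are the columns whose vertical edge
  above resp. below the row points up, numbered \<open>1..m\<close> from the right as in the paper.
\<close>

definition valid_row :: "nat \<Rightarrow> nat set \<Rightarrow> nat set \<Rightarrow> (nat \<Rightarrow> bool) \<Rightarrow> bool" where
  "valid_row m U B r \<longleftrightarrow> r 0 \<and> \<not> r m \<and> (\<forall>j>m. \<not> r j) \<and>
     (\<forall>j<m. of_bool (r j) + of_bool (\<not> r (Suc j)) + of_bool (m - j \<notin> U)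
              + of_bool (m - j \<in> B) = (2::nat))"

lemma valid_row_unique:
  assumes "valid_row m U B r" "valid_row m U B r'"
  shows "r = r'"
proof
  fix j
  show "r j = r' j"
  proof (cases "j \<le> m")
    case True
    then show ?thesis
    proof (induction j)
      case 0
      then show ?case
        using assms by (simp add: valid_row_def)
    next
      case (Suc j)
      then have "j < m" "r j = r' j"
        by simp_all
      with assms show ?case
        unfolding valid_row_def by (cases "r (Suc j)"; cases "r' (Suc j)") (fastforce+)
    qed
  next
    case False
    then show ?thesis
      using assms by (simp add: valid_row_def)
  qed
qed

lemma card_Int_atMost_Suc: "card (A \<inter> {..Suc s}) = card (A \<inter> {..s}) + of_bool (Suc s \<in> A)"
  by (simp add: atMost_Suc Int_insert_right)

lemma valid_row_flux:
  assumes U: "U \<subseteq> {1..m}" and B: "B \<subseteq> {1..m}" and r: "valid_row m U B r" and "t \<le> m"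
  shows "card (U \<inter> {..t}) = card (B \<inter> {..t}) + of_bool (r (m - t))"
  using \<open>t \<le> m\<close>
proof (induction t)
  case 0
  have "U \<inter> {..0} = {}" "B \<inter> {..0} = {}"
    using U B by auto
  then show ?case
    using r by (simp add: valid_row_def)
next
  case (Suc t)
  define j where "j = m - Suc t"
  have j: "j < m" "Suc j = m - t" "m - j = Suc t"
    using Suc.prems by (auto simp: j_def)
  have "of_bool (r j) + of_bool (\<not> r (m - t)) + of_bool (Suc t \<notin> U)
        + of_bool (Suc t \<in> B) = (2::nat)"
    using r j unfolding valid_row_def by metis
  then show ?case
    using Suc j by (cases "r j"; cases "r (m - t)"; cases "Suc t \<in> U"; cases "Suc t \<in> B")
      (simp_all add: card_Int_atMost_Suc j_def)
qed

lemma valid_row_interlaces: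
  assumes U: "U \<subseteq> {1..m}" and B: "B \<subseteq> {1..m}" and r: "valid_row m U B r"
  shows "interlaces U B"
proof -
  have all: "U \<inter> {..s} = U" "B \<inter> {..s} = B" if "m \<le> s" for s
    using that U B by auto
  have "card U = Suc (card B)"
    using valid_row_flux[OF U B r, of m] all[of m] r by (simp add: valid_row_def)
  moreover have "card (B \<inter> {..s}) \<le> card (U \<inter> {..s}) \<and> card (U \<inter> {..s}) \<le> Suc (card (B \<inter> {..s}))"
    for s
  proof (cases "s \<le> m")
    case True
    then show ?thesis
      using valid_row_flux[OF U B r True] by simp
  next
    case False
    then show ?thesis
      using all[of s] calculation by simp
  qed
  ultimately show ?thesis
    by (simp add: interlaces_def prefix_counts_interlace_def)
qed

lemma interlaces_valid_row:
  assumes U: "U \<subseteq> {1..m}" and B: "B \<subseteq> {1..m}" and UB: "interlaces U B"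
  shows "valid_row m U B (\<lambda>j. j \<le> m \<and> card (B \<inter> {..m - j}) < card (U \<inter> {..m - j}))"
proof -
  have "U \<inter> {..m} = U" "B \<inter> {..m} = B" "U \<inter> {..0} = {}" "B \<inter> {..0} = {}"
    using U B by auto
  moreover have
    "of_bool (card (B \<inter> {..Suc t}) < card (U \<inter> {..Suc t}))
     + of_bool (\<not> card (B \<inter> {..t}) < card (U \<inter> {..t}))
     + of_bool (Suc t \<notin> U) + of_bool (Suc t \<in> B) = (2::nat)" for t
    using interlaces_prefix_counts[OF UB, of t] interlaces_prefix_counts[OF UB, of "Suc t"]
    by (cases "Suc t \<in> U"; cases "Suc t \<in> B") (auto simp: card_Int_atMost_Suc)
  moreover have "m - j = Suc (m - Suc j)" if "j < m" for j
    using that by simp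
  ultimately show ?thesis
    using UB by (auto simp: valid_row_def interlaces_def)
qed


type_synonym state = "(nat \<Rightarrow> nat \<Rightarrow> bool) \<times> (nat \<Rightarrow> nat \<Rightarrow> bool)"

definition ice_states :: "nat \<Rightarrow> nat \<Rightarrow> nat set \<Rightarrow> state set" where
  "ice_states k m U = {(h, v). (\<forall>i j. (k \<le> i \<or> m < j) \<longrightarrow> \<not> h i j)
            \<and> (\<forall>i j. (k < i \<or> m \<le> j) \<longrightarrow> \<not> v i j)
            \<and> (\<forall>i<k. h i 0)
            \<and> (\<forall>i<k. \<not> h i m)
            \<and> (\<forall>j<m. \<not> v k j)
            \<and> (\<forall>j<m. v 0 j \<longleftrightarrow> m - j \<in> U)
            \<and> (\<forall>i<k. \<forall>j<m.
                 of_bool (h i j) + of_bool (\<not> h i (Suc j)) + of_bool (\<not> v i j)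
                 + of_bool (v (Suc i) j) = (2::nat))}"

lemma six_vertex_states_eq_ice_states:
  "six_vertex_states n lam = ice_states n (n + lam 1) (top_up_cols n lam)"
  unfolding six_vertex_states_def ice_states_def Let_def ..

definition up_columns :: "nat \<Rightarrow> (nat \<Rightarrow> bool) \<Rightarrow> nat set" where
  "up_columns m w = {c \<in> {1..m}. w (m - c)}"

lemma up_columns_eq_iff:
  assumes "B \<subseteq> {1..m}"
  shows "up_columns m w = B \<longleftrightarrow> (\<forall>j<m. w j \<longleftrightarrow> m - j \<in> B)"
proof
  assume "up_columns m w = B"
  then show "\<forall>j<m. w j \<longleftrightarrow> m - j \<in> B"
    by (auto simp: up_columns_def)
next
  assume w: "\<forall>j<m. w j \<longleftrightarrow> m - j \<in> B"
  show "up_columns m w = B"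
  proof (intro equalityI subsetI)
    fix c assume "c \<in> up_columns m w"
    then show "c \<in> B"
      using w[rule_format, of "m - c"] by (auto simp: up_columns_def)
  next
    fix c assume "c \<in> B"
    then show "c \<in> up_columns m w"
      using assms w[rule_format, of "m - c"] by (auto simp: up_columns_def)
  qed
qed

definition drop_row :: "state \<Rightarrow> state" where
  "drop_row s = (fst s \<circ> Suc, snd s \<circ> Suc)"

definition cons_row :: "nat \<Rightarrow> nat set \<Rightarrow> (nat \<Rightarrow> bool) \<Rightarrow> state \<Rightarrow> state" where
  "cons_row m U r s = (case_nat r (fst s), case_nat (\<lambda>j. j < m \<and> m - j \<in> U) (snd s))"

lemma first_row_valid:
  assumes "(h, v) \<in> ice_states (Suc k) m U"
  shows "valid_row m U (up_columns m (v 1)) (h 0)"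
proof -
  have ice: "\<forall>i<Suc k. \<forall>j<m. of_bool (h i j) + of_bool (\<not> h i (Suc j)) + of_bool (\<not> v i j)
          + of_bool (v (Suc i) j) = (2::nat)"
    and top: "\<forall>j<m. v 0 j \<longleftrightarrow> m - j \<in> U"
    using assms by (simp_all add: ice_states_def)
  have "of_bool (h 0 j) + of_bool (\<not> h 0 (Suc j)) + of_bool (\<not> v 0 j) + of_bool (v 1 j) = (2::nat)"
    and "v 0 j \<longleftrightarrow> m - j \<in> U" if "j < m" for j
    using ice[rule_format, OF zero_less_Suc that] top that by simp_all
  moreover have "v 1 j \<longleftrightarrow> m - j \<in> up_columns m (v 1)" if "j < m" for j
    using that by (auto simp: up_columns_def)
  moreover have "h 0 0" "\<not> h 0 m" "\<forall>j>m. \<not> h 0 j"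
    using assms unfolding ice_states_def by auto
  ultimately show ?thesis
    unfolding valid_row_def by simp
qed

lemma drop_row_ice_states:
  assumes "(h, v) \<in> ice_states (Suc k) m U"
  shows "drop_row (h, v) \<in> ice_states k m (up_columns m (v 1))"
  using assms by (auto simp: ice_states_def drop_row_def up_columns_def)

lemma cons_row_ice_states:
  assumes r: "valid_row m U B r" and s: "s \<in> ice_states k m B" and B: "B \<subseteq> {1..m}"
  shows "cons_row m U r s \<in> ice_states (Suc k) m U \<and> up_columns m (snd (cons_row m U r s) 1) = B"
proof -
  obtain h v where hv: "s = (h, v)"
    by (cases s)
  define h' where "h' = case_nat r h"
  define v' where "v' = case_nat (\<lambda>j. j < m \<and> m - j \<in> U) v"
  have v0: "v 0 j \<longleftrightarrow> m - j \<in> B" if "j < m" for j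
    using s that unfolding hv ice_states_def by auto
  have ice: "of_bool (h' i j) + of_bool (\<not> h' i (Suc j)) + of_bool (\<not> v' i j)
             + of_bool (v' (Suc i) j) = (2::nat)"
    if "i < Suc k" "j < m" for i j
  proof (cases i)
    case 0
    then show ?thesis
      using r that v0 unfolding valid_row_def h'_def v'_def by simp
  next
    case (Suc i')
    then show ?thesis
      using s that unfolding hv ice_states_def h'_def v'_def by simp
  qed
  have "(h', v') \<in> ice_states (Suc k) m U"
    using r s ice unfolding hv ice_states_def valid_row_def h'_def v'_def
    by (auto split: nat.split simp: less_Suc_eq_0_disj)
  moreover have "up_columns m (v' 1) = B"
    using v0 B by (simp add: up_columns_eq_iff v'_def)
  ultimately show ?thesis
    by (simp add: hv cons_row_def h'_def v'_def)
qed

lemma drop_row_bij: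
  assumes U: "U \<subseteq> {1..m}" and B: "B \<subseteq> {1..m}" and UB: "interlaces U B"
  shows "bij_betw drop_row {s \<in> ice_states (Suc k) m U. up_columns m (snd s 1) = B}
           (ice_states k m B)"
proof -
  define r where "r = (\<lambda>j. j \<le> m \<and> card (B \<inter> {..m - j}) < card (U \<inter> {..m - j}))"
  have r: "valid_row m U B r"
    unfolding r_def by (rule interlaces_valid_row[OF U B UB])
  show ?thesis
  proof (rule bij_betw_byWitness[where f' = "cons_row m U r"])
    show "\<forall>s\<in>{s \<in> ice_states (Suc k) m U. up_columns m (snd s 1) = B}.
            cons_row m U r (drop_row s) = s"
    proof
      fix s' assume "s' \<in> {s \<in> ice_states (Suc k) m U. up_columns m (snd s 1) = B}"
      moreover obtain h v where hv: "s' = (h, v)"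
        by (cases s')
      ultimately have s: "(h, v) \<in> ice_states (Suc k) m U" and "up_columns m (v 1) = B"
        by auto
      then have "h 0 = r"
        using valid_row_unique[OF _ r] first_row_valid[OF s] by simp
      moreover have "v 0 j = (j < m \<and> m - j \<in> U)" for j
        using s by (cases "j < m") (simp_all add: ice_states_def)
      ultimately show "cons_row m U r (drop_row s') = s'"
        unfolding hv
        by (auto simp: cons_row_def drop_row_def fun_eq_iff split: nat.split)
    qed
    show "\<forall>s\<in>ice_states k m B. drop_row (cons_row m U r s) = s"
      by (simp add: cons_row_def drop_row_def comp_def)
    show "drop_row ` {s \<in> ice_states (Suc k) m U. up_columns m (snd s 1) = B} \<subseteq> ice_states k m B"
      using drop_row_ice_states by force
    show "cons_row m U r ` ice_states k m B
            \<subseteq> {s \<in> ice_states (Suc k) m U. up_columns m (snd s 1) = B}"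
      using cons_row_ice_states[OF r _ B] by blast
  qed
qed

lemma ice_states_fiber_empty:
  assumes "U \<subseteq> {1..m}" "B \<subseteq> {1..m}" "\<not> interlaces U B"
  shows "{s \<in> ice_states (Suc k) m U. up_columns m (snd s 1) = B} = {}"
  using assms valid_row_interlaces[OF _ _ first_row_valid] by (force simp: up_columns_def)

lemma ice_states_0:
  assumes "U \<subseteq> {1..m}"
  shows "ice_states 0 m U = (if U = {} then {(\<lambda>_ _. False, \<lambda>_ _. False)} else {})"
proof (cases "U = {}")
  case True
  have "h = (\<lambda>_ _. False) \<and> v = (\<lambda>_ _. False)" if "(h, v) \<in> ice_states 0 m U" for h v
  proof (intro conjI ext)
    fix i j
    show "h i j = False"
      using that by (simp add: ice_states_def)
    show "v i j = False"
      using that True by (cases "0 < i \<or> m \<le> j") (auto simp: ice_states_def)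
  qed
  then show ?thesis
    using True by (auto simp: ice_states_def)
next
  case False
  then obtain c where "c \<in> U"
    by blast
  moreover from this have "1 \<le> c" "c \<le> m"
    using assms by auto
  ultimately have c: "c \<in> U" "1 \<le> c" "c \<le> m"
    by blast+
  have "(h, v) \<notin> ice_states 0 m U" for h v
  proof
    assume "(h, v) \<in> ice_states 0 m U"
    then have "\<forall>j<m. \<not> v 0 j" "\<forall>j<m. v 0 j \<longleftrightarrow> m - j \<in> U"
      unfolding ice_states_def mem_Collect_eq prod.case by blast+
    moreover have "m - c < m" "m - (m - c) = c"
      using c by auto
    ultimately show False
      using c(1) by metis
  qed
  then have "ice_states 0 m U = {}"
    by auto
  then show ?thesis
    using False by simp
qed


lemma interlacing_subsets_eq:
  assumes "U \<subseteq> {1..m}"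
  shows "{B \<in> Pow {1..m}. interlaces U B} = {B. B \<subseteq> {1..Max U} \<and> interlaces U B}"
proof (cases "U = {}")
  case False
  have "Max U \<le> m"
    using assms False finite_subset[OF assms] by auto
  moreover have "B \<subseteq> {1..Max U}" if "B \<subseteq> {1..m}" "interlaces U B" for B
    using that interlaces_le_Max[OF that(2) finite_subset[OF that(1)]] by auto
  ultimately show ?thesis
    by auto
qed (simp add: interlaces_def)

lemma card_ice_states:
  "U \<subseteq> {1..m} \<Longrightarrow> finite (ice_states k m U) \<and> card (ice_states k m U) = gt_count k U"
proof (induction k arbitrary: U)
  case 0
  then show ?case
    by (simp add: ice_states_0)
next
  case (Suc k)
  define fiber where "fiber B = {s \<in> ice_states (Suc k) m U. up_columns m (snd s 1) = B}" for B
  have "up_columns m w \<in> Pow {1..m}" for w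
    by (auto simp: up_columns_def)
  then have cover: "ice_states (Suc k) m U = (\<Union>B\<in>Pow {1..m}. fiber B)"
    unfolding fiber_def by blast
  have fiber: "finite (fiber B) \<and> card (fiber B) = (if interlaces U B then gt_count k B else 0)"
    if "B \<subseteq> {1..m}" for B
  proof (cases "interlaces U B")
    case True
    then have "bij_betw drop_row (fiber B) (ice_states k m B)"
      unfolding fiber_def using drop_row_bij Suc.prems that by blast
    then show ?thesis
      using Suc.IH[OF that] True by (simp add: bij_betw_finite bij_betw_same_card)
  next
    case False
    then have "fiber B = {}"
      unfolding fiber_def by (rule ice_states_fiber_empty[OF Suc.prems that])
    then show ?thesis
      using False by simp
  qed
  have "card (ice_states (Suc k) m U) = (\<Sum>B\<in>Pow {1..m}. card (fiber B))"
    unfolding cover using fiber by (intro card_UN_disjoint) (auto simp: fiber_def)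
  also have "\<dots> = (\<Sum>B\<in>Pow {1..m}. if interlaces U B then gt_count k B else 0)"
    using fiber by (intro sum.cong) auto
  also have "\<dots> = (\<Sum>B\<in>{B \<in> Pow {1..m}. interlaces U B}. gt_count k B)"
    by (rule sum.inter_filter[symmetric]) simp
  also have "\<dots> = (\<Sum>B | B \<subseteq> {1..Max U} \<and> interlaces U B. gt_count k B)"
    unfolding interlacing_subsets_eq[OF Suc.prems] ..
  finally show ?case
    unfolding cover using fiber by simp
qed


section \<open>Dependence on the first part\<close>

definition tail_up_cols :: "nat \<Rightarrow> (nat \<Rightarrow> nat) \<Rightarrow> nat set" where
  "tail_up_cols n lam = (\<lambda>k. lam k + n + 1 - k) ` {2..n}"

lemma top_up_cols_eq_image: "top_up_cols n lam = (\<lambda>k. lam k + n + 1 - k) ` {1..n}"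
  unfolding top_up_cols_def by auto

lemma top_up_cols_fun_upd_1:
  assumes "1 \<le> n"
  shows "top_up_cols n (lam(1 := l1)) = insert (l1 + n) (tail_up_cols n lam)"
proof -
  have "{1..n} = insert 1 {2..n}"
    using assms by auto
  moreover have "(\<lambda>k. (lam(1 := l1)) k + n + 1 - k) ` {2..n} = tail_up_cols n lam"
    unfolding tail_up_cols_def by (intro image_cong) auto
  ultimately show ?thesis
    unfolding top_up_cols_eq_image by simp
qed

lemma card_tail_up_cols:
  assumes "\<And>a b. 2 \<le> a \<Longrightarrow> a \<le> b \<Longrightarrow> b \<le> n \<Longrightarrow> lam b \<le> lam a"
  shows "card (tail_up_cols n lam) = n - 1"
proof -
  have "inj_on (\<lambda>k. lam k + n + 1 - k) {2..n}"
  proof (rule linorder_inj_onI')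
    fix a b :: nat assume "a \<in> {2..n}" "b \<in> {2..n}" "a < b"
    then show "lam a + n + 1 - a \<noteq> lam b + n + 1 - b"
      using assms[of a b] by simp
  qed
  then show ?thesis
    by (simp add: tail_up_cols_def card_image)
qed

lemma tail_up_cols_bounds:
  assumes "z \<in> tail_up_cols n lam" and "\<And>k. 2 \<le> k \<Longrightarrow> k \<le> n \<Longrightarrow> lam k \<le> l"
  shows "0 < z" "z < l + n"
proof -
  obtain k where k: "2 \<le> k" "k \<le> n" "z = lam k + n + 1 - k"
    using assms(1) by (auto simp: tail_up_cols_def)
  moreover have "lam k \<le> l"
    using assms(2) k by blast
  ultimately show "0 < z" "z < l + n"
    by auto
qed

theorem theorem3:
  fixes n :: nat and lam :: "nat \<Rightarrow> nat"
  assumes "n \<ge> 1"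
    and "\<And>k. 2 \<le> k \<Longrightarrow> k < n \<Longrightarrow> lam (Suc k) \<le> lam k"
  shows "\<exists>p :: real poly. degree p = n - 1 \<and>
           (\<forall>l1 :: nat. (n \<ge> 2 \<longrightarrow> lam 2 \<le> l1) \<longrightarrow>
              real (A_lambda (lam(1 := l1)) n) = poly p (real l1))"
proof -
  have antitone: "lam b \<le> lam a" if "2 \<le> a" "a \<le> b" "b \<le> n" for a b
    by (rule lift_Suc_antimono_le_ivl[where N = "{2..<n}"]) (use assms(2) that in auto)
  define F where "F = tail_up_cols n lam"
  have "finite F" "card F = n - 1" "0 \<notin> F"
    using card_tail_up_cols[OF antitone] tail_up_cols_bounds(1)
    by (auto simp: F_def tail_up_cols_def)
  then obtain p :: "real poly" where p: "degree p = n - 1"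
    "\<And>x. \<forall>z\<in>F. z < x \<Longrightarrow> real (gt_count n (insert x F)) = poly p (real x)"
    using gt_count_insert_poly[of F "n - 1"] assms(1) by auto
  show ?thesis
  proof (intro exI[of _ "pcompose p [:real n, 1:]"] conjI allI impI)
    show "degree (pcompose p [:real n, 1:]) = n - 1"
      using p(1) by (simp add: degree_pcompose)
    fix l1 assume "2 \<le> n \<longrightarrow> lam 2 \<le> l1"
    then have "lam k \<le> l1" if "2 \<le> k" "k \<le> n" for k
      using antitone[of 2 k] that by simp
    then have below: "\<forall>z\<in>F. 0 < z \<and> z < l1 + n"
      using tail_up_cols_bounds unfolding F_def by blast
    have "insert (l1 + n) F \<subseteq> {1..n + l1}"
    proof
      fix z assume "z \<in> insert (l1 + n) F"
      then show "z \<in> {1..n + l1}"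
        using assms(1) below by auto
    qed
    then have "card (ice_states n (n + l1) (insert (l1 + n) F)) = gt_count n (insert (l1 + n) F)"
      using card_ice_states by blast
    then have "A_lambda (lam(1 := l1)) n = gt_count n (insert (l1 + n) F)"
      unfolding A_lambda_def six_vertex_states_eq_ice_states
        top_up_cols_fun_upd_1[OF assms(1)] F_def
      by simp
    then show "real (A_lambda (lam(1 := l1)) n) = poly (pcompose p [:real n, 1:]) (real l1)"
      using p(2) below by (simp add: poly_pcompose add.commute)
  qed
qed

end
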